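(* For each $q\in\{25,49,121\}$ there exists an $(\mathbb{F}_4\times\mathbb{F}_q,\ \mathbb{F}_4\times\{0\},\ 4,1)$-BRDF and a nested $(4q,4,1)$-BIBD.
   Context: Here $\mathbb{F}_4\times\mathbb{F}_q$ is regarded as an additive group (the direct product of the additive groups of the finite fields). For a finite additive group $G$ with subgroup $H$, a $(G,H,k,\lambda)$-RDF is a collection of $k$-subsets of $G$ (base blocks) whose differences $x-y$ ($x\ne y$ in a common base block) cover every element of $G\setminus H$ exactly $\lambda$ times and no element of $H$; it is a BRDF if moreover all base blocks are disjoint from $H$ and the base blocks and their negatives are pairwise disjoint. A $(v,k,\lambda)$-BIBD is a set $X$ of $v$ points with a multiset $\mathcal{A}$ of $k$-subsets such that every pair of distinct points lies in exactly $\lambda$ blocks (partial: at most $\lambda$). A $(v,4,1)$-BIBD is nested if there is $\phi:\mathcal{A}\to X$ such that $\{A\cup\{\phi(A)\}\}$ is the block multiset of a partial $(v,5,2)$-BIBD on $X$ (in particular $\phi(A)\notin A$). *)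

theory Defs
  imports Main "HOL-Library.Multiset" "HOL-Library.Product_Plus"
begin

definition diff_count :: "'g::ab_group_add set list \<Rightarrow> 'g \<Rightarrow> nat" where
  "diff_count Bs g = (\<Sum>B\<leftarrow>Bs. card {(x, y). x \<in> B \<and> y \<in> B \<and> x \<noteq> y \<and> x - y = g})"

definition is_RDF :: "'g::ab_group_add set \<Rightarrow> 'g set \<Rightarrow> nat \<Rightarrow> nat \<Rightarrow> 'g set list \<Rightarrow> bool" where
  "is_RDF G H k lam Bs \<longleftrightarrow>
     (\<forall>B\<in>set Bs. B \<subseteq> G \<and> finite B \<and> card B = k) \<and>
     (\<forall>g\<in>G - H. diff_count Bs g = lam) \<and>
     (\<forall>g\<in>H. diff_count Bs g = 0)"

definition is_BRDF :: "'g::ab_group_add set \<Rightarrow> 'g set \<Rightarrow> nat \<Rightarrow> nat \<Rightarrow> 'g set list \<Rightarrow> bool" where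
  "is_BRDF G H k lam Bs \<longleftrightarrow>
     is_RDF G H k lam Bs \<and>
     (\<forall>B\<in>set Bs. B \<inter> H = {}) \<and>
     (let L = Bs @ map (\<lambda>B. uminus ` B) Bs in
       \<forall>i<length L. \<forall>j<length L. i \<noteq> j \<longrightarrow> L ! i \<inter> L ! j = {})"

definition is_BIBD :: "'p set \<Rightarrow> nat \<Rightarrow> nat \<Rightarrow> nat \<Rightarrow> 'p set multiset \<Rightarrow> bool" where
  "is_BIBD X v k lam As \<longleftrightarrow> finite X \<and> card X = v \<and>
     (\<forall>A\<in>#As. A \<subseteq> X \<and> card A = k) \<and>
     (\<forall>x\<in>X. \<forall>y\<in>X. x \<noteq> y \<longrightarrow> size (filter_mset (\<lambda>A. x \<in> A \<and> y \<in> A) As) = lam)"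

definition is_partial_BIBD :: "'p set \<Rightarrow> nat \<Rightarrow> nat \<Rightarrow> nat \<Rightarrow> 'p set multiset \<Rightarrow> bool" where
  "is_partial_BIBD X v k lam As \<longleftrightarrow> finite X \<and> card X = v \<and>
     (\<forall>A\<in>#As. A \<subseteq> X \<and> card A = k) \<and>
     (\<forall>x\<in>X. \<forall>y\<in>X. x \<noteq> y \<longrightarrow> size (filter_mset (\<lambda>A. x \<in> A \<and> y \<in> A) As) \<le> lam)"

text \<open>Nested (v,4,1)-BIBD: the map phi is given as a multiset N of pairs (block, phi(block)),
  one pair per block occurrence (so repeated blocks may get different points).\<close>
definition is_nested_BIBD :: "'p set \<Rightarrow> nat \<Rightarrow> 'p set multiset \<Rightarrow> bool" where
  "is_nested_BIBD X v As \<longleftrightarrow> is_BIBD X v 4 1 As \<and>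
     (\<exists>N :: ('p set \<times> 'p) multiset.
        image_mset fst N = As \<and> (\<forall>(A, x)\<in>#N. x \<in> X \<and> x \<notin> A) \<and>
        is_partial_BIBD X v 5 2 (image_mset (\<lambda>(A, x). insert x A) N))"

end

theory Submission
  imports Defs "HOL-Number_Theory.Number_Theory"
begin

text \<open>Write \<open>q = p\<^sup>2\<close> with \<open>p\<close> prime. Choosing \<open>w \<notin> \<bbbF>\<^sub>2\<close> and \<open>t \<notin> \<bbbF>\<^sub>p\<close>,
  every element of \<open>\<bbbF>\<^sub>4 \<times> \<bbbF>\<^sub>q\<close> is \<open>(a + b w, c + d t)\<close> with digits \<open>a, b < 2\<close> and
  \<open>c, d < p\<close>, so the group is numbered by \<open>{..<4q}\<close> and subtraction becomes digitwise
  subtraction of indices. Explicit base blocks can then be checked by evaluation: their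
  differences are all indices outside \<open>H = \<bbbF>\<^sub>4 \<times> {0}\<close>, each exactly once, and the blocks
  together with their negatives are pairwise disjoint and miss a row \<open>\<bbbF>\<^sub>4 \<times> {c}\<close> with
  \<open>c \<noteq> -c\<close>.

  The translates \<open>B + g\<close> of such a BRDF together with the cosets \<open>\<bbbF>\<^sub>4 \<times> {y}\<close> of \<open>H\<close>
  form a \<open>(4q, 4, 1)\<close>-BIBD: \<open>u \<noteq> v\<close> lie in a common translate iff \<open>u - v\<close> is a difference
  of a base block, and in a common coset iff \<open>u - v \<in> H\<close>. Nesting \<open>B + g\<close> with \<open>g\<close> and
  the coset of \<open>y\<close> with \<open>(0, y + c)\<close> adds at most one block through \<open>u, v\<close>: the new
  translates are those with \<open>\<plusminus>(u - v)\<close> in a base block, at most one since the base blocks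
  and their negatives are disjoint; the new cosets need \<open>snd (u - v) = \<plusminus>c\<close>, at most one
  since \<open>c \<noteq> -c\<close>, and then no base block contains \<open>\<plusminus>(u - v)\<close>.\<close>

section \<open>Nested designs from a balanced relative difference family\<close>

lemma card_Un3_le: "card (A \<union> B \<union> C) \<le> card A + card B + card C"
  by (meson add_le_mono card_Un_le le_refl order_trans)

lemma card_Collect_eq_conj: "card {x. x = a \<and> P} = of_bool P"
  by (cases P) auto

lemma size_filter_image_mset_set_UNIV:
  "size (filter_mset P (image_mset h (mset_set (UNIV :: 'a::finite set)))) = card {x. P (h x)}"
  by (simp add: filter_mset_image_mset)

lemma mem_translate_iff: "w \<in> (+) g ` B \<longleftrightarrow> w - g \<in> (B :: 'g::ab_group_add set)"
  by (auto intro: image_eqI[of _ _ "w - g"])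

lemma card_translates_containing_pair:
  fixes B :: "'g::ab_group_add set"
  assumes "u \<noteq> v"
  shows "card {g. u \<in> (+) g ` B \<and> v \<in> (+) g ` B}
       = card {(x, y). x \<in> B \<and> y \<in> B \<and> x \<noteq> y \<and> x - y = u - v}"
proof -
  have "{(x, y). x \<in> B \<and> y \<in> B \<and> x \<noteq> y \<and> x - y = u - v}
      = (\<lambda>g. (u - g, v - g)) ` {g. u \<in> (+) g ` B \<and> v \<in> (+) g ` B}"
  proof (intro equalityI subsetI)
    fix z assume "z \<in> {(x, y). x \<in> B \<and> y \<in> B \<and> x \<noteq> y \<and> x - y = u - v}"
    then obtain x y where z: "z = (x, y)" "x \<in> B" "y \<in> B" "x - y = u - v" by blast
    then have "y = v - (u - x)" by (simp add: algebra_simps)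
    with z show "z \<in> (\<lambda>g. (u - g, v - g)) ` {g. u \<in> (+) g ` B \<and> v \<in> (+) g ` B}"
      by (intro image_eqI[of _ _ "u - x"]) (auto simp: mem_translate_iff)
  next
    fix z assume "z \<in> (\<lambda>g. (u - g, v - g)) ` {g. u \<in> (+) g ` B \<and> v \<in> (+) g ` B}"
    then show "z \<in> {(x, y). x \<in> B \<and> y \<in> B \<and> x \<noteq> y \<and> x - y = u - v}"
      using assms by (auto simp: mem_translate_iff)
  qed
  moreover have "inj_on (\<lambda>g. (u - g, v - g)) {g. u \<in> (+) g ` B \<and> v \<in> (+) g ` B}"
    by (auto intro: inj_onI)
  ultimately show ?thesis by (simp add: card_image)
qed

lemma card_extended_translates_containing_pair:
  fixes B :: "'g::{ab_group_add,finite} set"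
  assumes "u \<noteq> v"
  shows "card {g. u \<in> insert g ((+) g ` B) \<and> v \<in> insert g ((+) g ` B)}
       \<le> card {g. u \<in> (+) g ` B \<and> v \<in> (+) g ` B} + of_bool (v - u \<in> B) + of_bool (u - v \<in> B)"
proof -
  have "{g. u \<in> insert g ((+) g ` B) \<and> v \<in> insert g ((+) g ` B)} \<subseteq>
      {g. u \<in> (+) g ` B \<and> v \<in> (+) g ` B} \<union> {g. g = u \<and> v - u \<in> B} \<union> {g. g = v \<and> u - v \<in> B}"
    using assms by (auto simp: mem_translate_iff)
  then have "card {g. u \<in> insert g ((+) g ` B) \<and> v \<in> insert g ((+) g ` B)} \<le>
      card ({g. u \<in> (+) g ` B \<and> v \<in> (+) g ` B} \<union> {g. g = u \<and> v - u \<in> B} \<union> {g. g = v \<and> u - v \<in> B})"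
    by (rule card_mono[rotated]) simp
  also have "\<dots> \<le> card {g. u \<in> (+) g ` B \<and> v \<in> (+) g ` B} + card {g. g = u \<and> v - u \<in> B}
      + card {g. g = v \<and> u - v \<in> B}"
    by (rule card_Un3_le)
  finally show ?thesis by (simp add: card_Collect_eq_conj)
qed

lemma sum_list_of_bool_le_1_if_disjoint:
  assumes "\<forall>i<length L. \<forall>j<length L. i \<noteq> j \<longrightarrow> L ! i \<inter> L ! j = {}"
  shows "(\<Sum>X\<leftarrow>L. of_bool (d \<in> X)) \<le> (1::nat)"
proof -
  have "(\<Sum>X\<leftarrow>L. of_bool (d \<in> X)) = length (filter (\<lambda>X. d \<in> X) L)"
    by (induction L) auto
  also have "\<dots> = card {i. i < length L \<and> d \<in> L ! i}"
    by (rule length_filter_conv_card)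
  also have "\<dots> \<le> 1"
    using card_le_Suc0_iff_eq[of "{i. i < length L \<and> d \<in> L ! i}"] assms by auto
  finally show ?thesis .
qed

lemma BRDF_occurrences_le_1:
  assumes "is_BRDF G H k lam Bs"
  shows "(\<Sum>B\<leftarrow>Bs. of_bool (d \<in> B)) + (\<Sum>B\<leftarrow>Bs. of_bool (- d \<in> B)) \<le> (1::nat)"
proof -
  have "d \<in> uminus ` B \<longleftrightarrow> - d \<in> B" for B
    by (auto intro: image_eqI[of _ _ "- d"])
  then have "(\<Sum>B\<leftarrow>Bs. of_bool (- d \<in> B)) = (\<Sum>B\<leftarrow>map (\<lambda>B. uminus ` B) Bs. of_bool (d \<in> B) :: nat)"
    by (simp add: comp_def)
  then have "(\<Sum>B\<leftarrow>Bs. of_bool (d \<in> B)) + (\<Sum>B\<leftarrow>Bs. of_bool (- d \<in> B))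
      = (\<Sum>B\<leftarrow>Bs @ map (\<lambda>B. uminus ` B) Bs. of_bool (d \<in> B) :: nat)"
    by simp
  also have "\<dots> \<le> 1"
    using assms unfolding is_BRDF_def Let_def by (intro sum_list_of_bool_le_1_if_disjoint) blast
  finally show ?thesis .
qed

lemma card_extended_rows_containing_pair:
  fixes u v :: "'x::zero \<times> 'y::ab_group_add"
  assumes "u \<noteq> v"
  shows "card {y. u \<in> insert (0, y + c) (UNIV \<times> {y}) \<and> v \<in> insert (0, y + c) (UNIV \<times> {y})}
       \<le> of_bool (snd u = snd v) + of_bool (snd u - snd v = c) + of_bool (snd v - snd u = c)"
proof -
  have "{y. u \<in> insert (0, y + c) (UNIV \<times> {y}) \<and> v \<in> insert (0, y + c) (UNIV \<times> {y})} \<subseteq>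
      {y. y = snd u \<and> snd u = snd v} \<union> {y. y = snd v \<and> snd u - snd v = c} \<union> {y. y = snd u \<and> snd v - snd u = c}"
    using assms by (cases u, cases v) (auto simp: algebra_simps)
  then have "card {y. u \<in> insert (0, y + c) (UNIV \<times> {y}) \<and> v \<in> insert (0, y + c) (UNIV \<times> {y})} \<le>
      card ({y. y = snd u \<and> snd u = snd v} \<union> {y. y = snd v \<and> snd u - snd v = c}
        \<union> {y. y = snd u \<and> snd v - snd u = c})"
    by (rule card_mono[rotated]) simp
  also have "\<dots> \<le> card {y. y = snd u \<and> snd u = snd v} + card {y. y = snd v \<and> snd u - snd v = c}
      + card {y. y = snd u \<and> snd v - snd u = c}"
    by (rule card_Un3_le)
  finally show ?thesis by (simp add: card_Collect_eq_conj)
qed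

definition nested_development ::
  "('x::{ab_group_add,finite} \<times> 'y::{ab_group_add,finite}) set list \<Rightarrow> 'y
    \<Rightarrow> (('x \<times> 'y) set \<times> ('x \<times> 'y)) multiset" where
  "nested_development Bs c =
     (\<Sum>B\<leftarrow>Bs. image_mset (\<lambda>g. ((+) g ` B, g)) (mset_set UNIV)) +
     image_mset (\<lambda>y. (UNIV \<times> {y}, (0, y + c))) (mset_set UNIV)"

lemma size_filter_nested_development:
  "size (filter_mset P (image_mset f (nested_development Bs c)))
    = (\<Sum>B\<leftarrow>Bs. card {g. P (f ((+) g ` B, g))}) + card {y. P (f (UNIV \<times> {y}, (0, y + c)))}"
proof -
  have "size (filter_mset P (image_mset f (\<Sum>B\<leftarrow>Bs. M B)))
      = (\<Sum>B\<leftarrow>Bs. size (filter_mset P (image_mset f (M B))))" for M :: "_ \<Rightarrow> _ multiset"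
    by (induction Bs) auto
  then show ?thesis
    by (simp add: nested_development_def size_filter_image_mset_set_UNIV image_mset.compositionality comp_def)
qed

lemma set_mset_nested_development:
  "set_mset (nested_development Bs c)
    = (\<Union>B\<in>set Bs. range (\<lambda>g. ((+) g ` B, g))) \<union> range (\<lambda>y. (UNIV \<times> {y}, (0, y + c)))"
proof -
  have "set_mset (\<Sum>B\<leftarrow>Bs. image_mset (\<lambda>g. ((+) g ` B, g)) (mset_set UNIV))
      = (\<Union>B\<in>set Bs. range (\<lambda>g. ((+) g ` B, g)))"
    by (induction Bs) simp_all
  then show ?thesis by (simp add: nested_development_def)
qed

lemma card_rows_containing_pair:
  "card {y. u \<in> UNIV \<times> {y} \<and> v \<in> UNIV \<times> {y}} = of_bool (snd u = snd v)"
proof -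
  have "{y. u \<in> UNIV \<times> {y} \<and> v \<in> UNIV \<times> {y}} = (if snd u = snd v then {snd u} else {})"
    by (cases u, cases v) auto
  then show ?thesis by simp
qed

lemma diff_count_of_RDF:
  assumes "is_RDF UNIV {g. snd g = 0} k 1 Bs"
  shows "diff_count Bs d = of_bool (snd d \<noteq> 0)"
proof -
  have "\<forall>g\<in>UNIV - {g. snd g = 0}. diff_count Bs g = 1" "\<forall>g\<in>{g. snd g = 0}. diff_count Bs g = 0"
    using assms unfolding is_RDF_def by blast+
  show ?thesis
  proof (cases "snd d = 0")
    case True
    then have "diff_count Bs d = 0" using \<open>\<forall>g\<in>{g. snd g = 0}. diff_count Bs g = 0\<close> by blast
    with True show ?thesis by simp
  next
    case False
    then have "diff_count Bs d = 1" using \<open>\<forall>g\<in>UNIV - {g. snd g = 0}. diff_count Bs g = 1\<close> by blast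
    with False show ?thesis by simp
  qed
qed

lemma nested_development_BIBD:
  fixes Bs :: "('x::{ab_group_add,finite} \<times> 'y::{ab_group_add,finite}) set list"
  assumes RDF: "is_RDF UNIV {g. snd g = 0} 4 1 Bs" and card_x: "card (UNIV :: 'x set) = 4"
  shows "is_BIBD UNIV (card (UNIV :: ('x \<times> 'y) set)) 4 1 (image_mset fst (nested_development Bs c))"
  unfolding is_BIBD_def
proof (intro conjI ballI impI)
  fix A assume "A \<in># image_mset fst (nested_development Bs c)"
  then obtain x where "(A, x) \<in># nested_development Bs c" by auto
  then have "(\<exists>B\<in>set Bs. A = (+) x ` B) \<or> (\<exists>y. A = UNIV \<times> {y})"
    unfolding set_mset_nested_development by blast
  moreover have "card ((+) x ` B) = 4" if "B \<in> set Bs" for B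
    using RDF that unfolding is_RDF_def by (simp add: card_image)
  ultimately show "A \<subseteq> UNIV" "card A = 4" using card_x by (auto simp: card_cartesian_product)
next
  fix u v :: "'x \<times> 'y" assume "u \<noteq> v"
  then have "size (filter_mset (\<lambda>A. u \<in> A \<and> v \<in> A) (image_mset fst (nested_development Bs c)))
      = diff_count Bs (u - v) + of_bool (snd u = snd v)"
    by (simp add: size_filter_nested_development card_translates_containing_pair
        card_rows_containing_pair diff_count_def)
  then show "size (filter_mset (\<lambda>A. u \<in> A \<and> v \<in> A) (image_mset fst (nested_development Bs c))) = 1"
    by (simp add: diff_count_of_RDF[OF RDF])
qed simp_all

lemma nested_development_point_notin:
  assumes "\<forall>B\<in>set Bs. 0 \<notin> B" "c \<noteq> 0" "(A, x) \<in># nested_development Bs c"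
  shows "x \<notin> A"
proof -
  from assms(3) consider B where "B \<in> set Bs" "A = (+) x ` B" | y where "A = UNIV \<times> {y}" "x = (0, y + c)"
    unfolding set_mset_nested_development by blast
  then show ?thesis
  proof cases
    case 1
    then show ?thesis using assms(1) by (simp add: mem_translate_iff)
  next
    case 2
    then show ?thesis using assms(2) by simp
  qed
qed

context
  fixes Bs :: "('x::{ab_group_add,finite} \<times> 'y::{ab_group_add,finite}) set list" and c :: 'y
  assumes BRDF: "is_BRDF UNIV {g. snd g = 0} 4 1 Bs"
    and c_ne: "c \<noteq> - c" and avoid_c: "\<forall>B\<in>set Bs. \<forall>x\<in>B. snd x \<noteq> c \<and> snd x \<noteq> - c"
begin

lemma occurrences_in_special_rows:
  assumes "snd e \<in> {0, c, - c}"
  shows "(\<Sum>B\<leftarrow>Bs. of_bool (e \<in> B)) = (0::nat)"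
proof -
  have "e \<notin> B" if "B \<in> set Bs" for B
  proof
    assume "e \<in> B"
    then have "snd e \<noteq> 0" "snd e \<noteq> c" "snd e \<noteq> - c"
      using BRDF avoid_c that unfolding is_BRDF_def by blast+
    with assms show False by blast
  qed
  then show ?thesis by simp
qed

lemma nested_development_pair_count_le:
  assumes "u \<noteq> v"
  shows "size (filter_mset (\<lambda>A. u \<in> A \<and> v \<in> A) (image_mset (\<lambda>(A, x). insert x A) (nested_development Bs c)))
    \<le> 2"
proof -
  define d where "d = u - v"
  define occ where "occ e = (\<Sum>B\<leftarrow>Bs. of_bool (e \<in> B) :: nat)" for e
  have "size (filter_mset (\<lambda>A. u \<in> A \<and> v \<in> A) (image_mset (\<lambda>(A, x). insert x A) (nested_development Bs c)))
      = (\<Sum>B\<leftarrow>Bs. card {g. u \<in> insert g ((+) g ` B) \<and> v \<in> insert g ((+) g ` B)})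
        + card {y. u \<in> insert (0, y + c) (UNIV \<times> {y}) \<and> v \<in> insert (0, y + c) (UNIV \<times> {y})}"
    by (simp add: size_filter_nested_development)
  also have "\<dots> \<le> (\<Sum>B\<leftarrow>Bs. card {g. u \<in> (+) g ` B \<and> v \<in> (+) g ` B} + of_bool (v - u \<in> B) + of_bool (u - v \<in> B))
      + (of_bool (snd u = snd v) + of_bool (snd u - snd v = c) + of_bool (snd v - snd u = c))"
    using assms
    by (intro add_mono sum_list_mono card_extended_translates_containing_pair card_extended_rows_containing_pair)
  also have "\<dots> = diff_count Bs d + occ (- d) + occ d
      + (of_bool (snd d = 0) + of_bool (snd d = c) + of_bool (snd d = - c))"
    using assms by (simp add: sum_list_addf card_translates_containing_pair diff_count_def d_def occ_def
        eq_neg_iff_add_eq_0 algebra_simps)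
  also have "\<dots> \<le> 2"
  proof -
    note no_occ = occurrences_in_special_rows[folded occ_def]
    have dc: "diff_count Bs d = of_bool (snd d \<noteq> 0)"
      using BRDF unfolding is_BRDF_def by (blast intro: diff_count_of_RDF)
    have "c \<noteq> 0" using c_ne by auto
    consider "snd d = 0" | "snd d \<noteq> 0" "snd d = c \<or> snd d = - c" | "snd d \<notin> {0, c, - c}" by auto
    then show ?thesis
    proof cases
      case 1
      then show ?thesis using no_occ[of d] no_occ[of "- d"] dc \<open>c \<noteq> 0\<close> by simp
    next
      case 2
      then show ?thesis using no_occ[of d] no_occ[of "- d"] dc c_ne by auto
    next
      case 3
      then show ?thesis using BRDF_occurrences_le_1[OF BRDF, of d] dc by (simp add: occ_def)
    qed
  qed
  finally show ?thesis .
qed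

end

lemma is_nested_BIBD_nested_development:
  fixes Bs :: "('x::{ab_group_add,finite} \<times> 'y::{ab_group_add,finite}) set list"
  assumes BRDF: "is_BRDF UNIV {g. snd g = 0} 4 1 Bs" and "card (UNIV :: 'x set) = 4"
    and "c \<noteq> - c" and "\<forall>B\<in>set Bs. \<forall>x\<in>B. snd x \<noteq> c \<and> snd x \<noteq> - c"
  shows "is_nested_BIBD UNIV (card (UNIV :: ('x \<times> 'y) set)) (image_mset fst (nested_development Bs c))"
proof -
  let ?N = "nested_development Bs c"
  have BIBD: "is_BIBD UNIV (card (UNIV :: ('x \<times> 'y) set)) 4 1 (image_mset fst ?N)"
    using BRDF assms(2) by (intro nested_development_BIBD) (auto simp: is_BRDF_def)
  have "\<forall>B\<in>set Bs. B \<inter> {g. snd g = 0} = {}" using BRDF by (simp add: is_BRDF_def)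
  then have "\<forall>B\<in>set Bs. 0 \<notin> B" by fastforce
  moreover have "c \<noteq> 0" using assms(3) by auto
  ultimately have notin: "x \<notin> A" if "(A, x) \<in># ?N" for A x
    using nested_development_point_notin that by blast
  have "is_partial_BIBD UNIV (card (UNIV :: ('x \<times> 'y) set)) 5 2 (image_mset (\<lambda>(A, x). insert x A) ?N)"
    unfolding is_partial_BIBD_def
  proof (intro conjI ballI impI)
    fix A' assume "A' \<in># image_mset (\<lambda>(A, x). insert x A) ?N"
    then obtain A x where Ax: "(A, x) \<in># ?N" "A' = insert x A" by auto
    then have "A \<in># image_mset fst ?N" by (auto intro: rev_image_eqI)
    then have "finite A" "card A = 4" using BIBD by (auto simp: is_BIBD_def)
    then show "A' \<subseteq> UNIV" "card A' = 5" using Ax(2) notin[OF Ax(1)] by simp_all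
  next
    fix u v :: "'x \<times> 'y" assume "u \<noteq> v"
    then show "size (filter_mset (\<lambda>A. u \<in> A \<and> v \<in> A) (image_mset (\<lambda>(A, x). insert x A) ?N)) \<le> 2"
      by (rule nested_development_pair_count_le[OF BRDF assms(3,4)])
  qed simp_all
  then show ?thesis
    unfolding is_nested_BIBD_def using BIBD notin by blast
qed

section \<open>Relabelling the points of a design\<close>

lemma image_block_bij_betw:
  assumes "bij_betw h X Y" "A \<subseteq> X"
  shows "h ` A \<subseteq> Y" "card (h ` A) = card A"
  using assms by (auto simp: bij_betw_def card_image inj_on_subset)

lemma pair_count_image_mset:
  assumes "bij_betw h X Y" "\<forall>A\<in>#M. A \<subseteq> X" "x' \<in> Y" "y' \<in> Y" "x' \<noteq> y'"
  obtains x y where "x \<in> X" "y \<in> X" "x \<noteq> y"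
    "size (filter_mset (\<lambda>A. x' \<in> A \<and> y' \<in> A) (image_mset (image h) M))
      = size (filter_mset (\<lambda>A. x \<in> A \<and> y \<in> A) M)"
proof -
  have Y: "Y = h ` X" "inj_on h X" using assms(1) by (simp_all add: bij_betw_def)
  then obtain x y where xy: "x \<in> X" "y \<in> X" "x' = h x" "y' = h y" using assms(3,4) by blast
  have "filter_mset (\<lambda>A. h x \<in> h ` A \<and> h y \<in> h ` A) M = filter_mset (\<lambda>A. x \<in> A \<and> y \<in> A) M"
    using Y(2) assms(2) xy(1,2) by (intro filter_mset_cong) (auto simp: inj_on_image_mem_iff)
  then have "size (filter_mset (\<lambda>A. x' \<in> A \<and> y' \<in> A) (image_mset (image h) M))
      = size (filter_mset (\<lambda>A. x \<in> A \<and> y \<in> A) M)"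
    unfolding xy(3,4) by (simp add: filter_mset_image_mset comp_def)
  moreover have "x \<noteq> y" using xy(3,4) assms(5) by blast
  ultimately show ?thesis using that xy(1,2) by blast
qed

lemma is_BIBD_image:
  assumes h: "bij_betw h X Y" and M: "is_BIBD X v k lam M"
  shows "is_BIBD Y v k lam (image_mset (image h) M)"
  unfolding is_BIBD_def
proof (intro conjI ballI impI)
  have X: "finite X" "card X = v" "\<forall>A\<in>#M. A \<subseteq> X \<and> card A = k"
    using M by (simp_all add: is_BIBD_def)
  then show "finite Y" "card Y = v" using bij_betw_finite[OF h] bij_betw_same_card[OF h] by simp_all
  show "A' \<subseteq> Y" "card A' = k" if block: "A' \<in># image_mset (image h) M" for A'
  proof -
    obtain A where "A \<in># M" "A' = h ` A" using block by auto
    then show "A' \<subseteq> Y" "card A' = k" using X(3) image_block_bij_betw[OF h, of A] by simp_all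
  qed
  fix x' y' assume "x' \<in> Y" "y' \<in> Y" "x' \<noteq> y'"
  with h X(3) obtain x y where "x \<in> X" "y \<in> X" "x \<noteq> y"
    "size (filter_mset (\<lambda>A. x' \<in> A \<and> y' \<in> A) (image_mset (image h) M))
      = size (filter_mset (\<lambda>A. x \<in> A \<and> y \<in> A) M)"
    by (elim pair_count_image_mset) auto
  with M show "size (filter_mset (\<lambda>A. x' \<in> A \<and> y' \<in> A) (image_mset (image h) M)) = lam"
    by (simp add: is_BIBD_def)
qed

lemma is_partial_BIBD_image:
  assumes h: "bij_betw h X Y" and M: "is_partial_BIBD X v k lam M"
  shows "is_partial_BIBD Y v k lam (image_mset (image h) M)"
  unfolding is_partial_BIBD_def
proof (intro conjI ballI impI)
  have X: "finite X" "card X = v" "\<forall>A\<in>#M. A \<subseteq> X \<and> card A = k"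
    using M by (simp_all add: is_partial_BIBD_def)
  then show "finite Y" "card Y = v" using bij_betw_finite[OF h] bij_betw_same_card[OF h] by simp_all
  show "A' \<subseteq> Y" "card A' = k" if block: "A' \<in># image_mset (image h) M" for A'
  proof -
    obtain A where "A \<in># M" "A' = h ` A" using block by auto
    then show "A' \<subseteq> Y" "card A' = k" using X(3) image_block_bij_betw[OF h, of A] by simp_all
  qed
  fix x' y' assume "x' \<in> Y" "y' \<in> Y" "x' \<noteq> y'"
  with h X(3) obtain x y where "x \<in> X" "y \<in> X" "x \<noteq> y"
    "size (filter_mset (\<lambda>A. x' \<in> A \<and> y' \<in> A) (image_mset (image h) M))
      = size (filter_mset (\<lambda>A. x \<in> A \<and> y \<in> A) M)"
    by (elim pair_count_image_mset) auto
  with M show "size (filter_mset (\<lambda>A. x' \<in> A \<and> y' \<in> A) (image_mset (image h) M)) \<le> lam"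
    by (simp add: is_partial_BIBD_def)
qed

lemma is_nested_BIBD_image:
  assumes h: "bij_betw h X Y" and As: "is_nested_BIBD X v As"
  shows "is_nested_BIBD Y v (image_mset (image h) As)"
proof -
  obtain N where N: "image_mset fst N = As" "\<forall>(A, x)\<in>#N. x \<in> X \<and> x \<notin> A"
    "is_partial_BIBD X v 5 2 (image_mset (\<lambda>(A, x). insert x A) N)"
    using As unfolding is_nested_BIBD_def by blast
  have BIBD: "is_BIBD X v 4 1 As" using As by (simp add: is_nested_BIBD_def)
  have Y: "Y = h ` X" "inj_on h X" using h by (simp_all add: bij_betw_def)
  define N' where "N' = image_mset (map_prod (image h) h) N"
  have "image_mset fst N' = image_mset (image h) As"
    unfolding N'_def N(1)[symmetric] by (simp add: image_mset.compositionality comp_def)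
  moreover have "\<forall>(A', x')\<in>#N'. x' \<in> Y \<and> x' \<notin> A'"
  proof (intro ballI)
    fix z assume "z \<in># N'"
    then obtain A x where Ax: "(A, x) \<in># N" "z = (h ` A, h x)" unfolding N'_def by auto
    have "A \<in># As" using Ax(1) N(1) by force
    then have "A \<subseteq> X" using BIBD by (simp add: is_BIBD_def)
    moreover have "x \<in> X" "x \<notin> A" using N(2) Ax(1) by auto
    ultimately have "h x \<in> Y" "h x \<notin> h ` A" using Y by (simp_all add: inj_on_image_mem_iff)
    then show "case z of (A', x') \<Rightarrow> x' \<in> Y \<and> x' \<notin> A'" using Ax(2) by simp
  qed
  moreover have "image_mset (\<lambda>(A, x). insert x A) N' = image_mset (image h) (image_mset (\<lambda>(A, x). insert x A) N)"
    unfolding N'_def by (simp add: image_mset.compositionality comp_def case_prod_unfold)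
  ultimately show ?thesis
    unfolding is_nested_BIBD_def
    using is_BIBD_image[OF h BIBD] is_partial_BIBD_image[OF h N(3)] by auto
qed

section \<open>Coordinates in finite fields\<close>

lemma CHAR_eq_of_card_eq_prime_power:
  assumes "card (UNIV :: 'f::{field,finite} set) = r ^ n" "prime r" "n > 0"
  shows "CHAR('f) = r"
proof -
  have "prime CHAR('f)" by (simp add: finite_imp_CHAR_pos prime_CHAR_semidom)
  moreover have "CHAR('f) dvd r ^ n" using CHAR_dvd_CARD[where 'a='f] assms(1) by simp
  ultimately show ?thesis using assms(2) prime_dvd_power primes_dvd_imp_eq by blast
qed

lemma inverse_of_int_in_range:
  assumes "CHAR('f::field) > 0"
  shows "inverse (of_int k :: 'f) \<in> range of_int"
proof (cases "(of_int k :: 'f) = 0")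
  case False
  have "prime (int CHAR('f))" using assms prime_CHAR_semidom by simp
  moreover have "\<not> int CHAR('f) dvd k" using False by (simp add: of_int_eq_0_iff_char_dvd)
  ultimately obtain k' where "[k * k' = 1] (mod int CHAR('f))"
    using cong_solve_coprime_int prime_imp_coprime coprime_commute by metis
  then have "(of_int k :: 'f) * of_int k' = 1"
    by (metis of_int_1 of_int_eq_iff_cong_CHAR of_int_mult)
  then show ?thesis by (metis inverse_unique rangeI)
qed (metis inverse_zero rangeI)

lemma exists_not_in_prime_subfield:
  assumes "CHAR('f::ring_1) < card (UNIV :: 'f set)"
  obtains t where "t \<notin> range (of_int :: int \<Rightarrow> 'f)"
proof -
  have "finite (UNIV :: 'f set)" using assms card.infinite by fastforce
  then have pos: "CHAR('f) > 0" by (rule finite_imp_CHAR_pos)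
  have "range (of_int :: int \<Rightarrow> 'f) \<subseteq> of_nat ` {..<CHAR('f)}"
  proof
    fix x :: 'f assume "x \<in> range of_int"
    then obtain z where "x = of_int z" by blast
    also have "\<dots> = of_int (z mod int CHAR('f))" by (simp add: of_int_eq_iff_cong_CHAR)
    also have "\<dots> = of_nat (nat (z mod int CHAR('f)))" using pos by simp
    finally show "x \<in> of_nat ` {..<CHAR('f)}"
      using pos by (intro image_eqI[of _ _ "nat (z mod int CHAR('f))"]) (auto simp: nat_less_iff)
  qed
  then have "card (range (of_int :: int \<Rightarrow> 'f)) \<le> card (of_nat ` {..<CHAR('f)} :: 'f set)"
    by (intro card_mono) auto
  also have "\<dots> \<le> CHAR('f)"
    using card_image_le[of "{..<CHAR('f)}" "of_nat :: nat \<Rightarrow> 'f"] by simp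
  finally have "range (of_int :: int \<Rightarrow> 'f) \<noteq> UNIV" using assms by auto
  then show ?thesis using that by blast
qed

lemma bij_betw_UNIV_if_inj_on:
  assumes "inj_on f A" "card A = card (UNIV :: 'b set)" "finite (UNIV :: 'b set)"
  shows "bij_betw (f :: 'a \<Rightarrow> 'b) A UNIV"
  using assms by (metis bij_betw_def card_image card_subset_eq subset_UNIV)

lemma of_nat_plus_times_eq_iff:
  fixes t :: "'f::field"
  assumes "CHAR('f) = r" "t \<notin> range of_int" "a < r" "b < r" "a' < r" "b' < r"
  shows "of_nat a + of_nat b * t = of_nat a' + of_nat b' * t \<longleftrightarrow> a = a' \<and> b = b'"
proof
  assume eq: "of_nat a + of_nat b * t = of_nat a' + of_nat b' * t"
  have b: "(of_nat b :: 'f) = of_nat b'"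
  proof (rule ccontr)
    assume "(of_nat b :: 'f) \<noteq> of_nat b'"
    moreover have "(of_nat b - of_nat b') * t = of_nat a' - of_nat a" using eq by (simp add: algebra_simps)
    ultimately have "t = of_int (int a' - int a) * inverse (of_int (int b - int b'))"
      by (simp add: field_simps)
    moreover obtain k where "inverse (of_int (int b - int b') :: 'f) = of_int k"
      using inverse_of_int_in_range assms(1,3) by (metis gr_zeroI not_less0 rangeE)
    ultimately have "t = of_int ((int a' - int a) * k)" by simp
    with assms(2) show False by blast
  qed
  then have "(of_nat a :: 'f) = of_nat a'" using eq by simp
  with b show "a = a' \<and> b = b'"
    using assms(1,3-6) by (simp add: of_nat_eq_iff_cong_CHAR cong_less_modulus_unique_nat)
qed simp

lemma of_nat_diff_mod_CHAR:
  assumes "y \<le> x + CHAR('a)"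
  shows "(of_nat ((x + CHAR('a) - y) mod CHAR('a)) :: 'a::ring_1) = of_nat x - of_nat y"
proof -
  have "(of_nat ((x + CHAR('a) - y) mod CHAR('a)) :: 'a) = of_nat (x + CHAR('a) - y)"
    by (simp add: of_nat_eq_iff_cong_CHAR)
  also have "\<dots> = of_nat x - of_nat y" using assms by simp
  finally show ?thesis .
qed

definition field_of_digits :: "nat \<Rightarrow> 'f::field \<Rightarrow> nat \<Rightarrow> 'f" where
  "field_of_digits r t m = of_nat (m mod r) + of_nat (m div r) * t"

definition digit_diff :: "nat \<Rightarrow> nat \<Rightarrow> nat \<Rightarrow> nat" where
  "digit_diff r m n = (m mod r + r - n mod r) mod r + r * ((m div r + r - n div r) mod r)"

lemma digit_diff_less:
  assumes "0 < r"
  shows "digit_diff r m n < r * r"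
proof -
  have "a + r * b < r * r" if "a < r" "b < r" for a b
  proof -
    have "a + r * b < r * Suc b" using that by simp
    also have "\<dots> \<le> r * r" using that by (intro mult_le_mono2) simp
    finally show ?thesis .
  qed
  then show ?thesis using assms by (simp add: digit_diff_def)
qed

lemma field_of_digits_eq_iff:
  fixes t :: "'f::field"
  assumes CHAR_eq: "CHAR('f) = r" and t_nonprime: "t \<notin> range of_int"
    and "m < r * r" "n < r * r"
  shows "field_of_digits r t m = field_of_digits r t n \<longleftrightarrow> m = n"
proof -
  have "0 < r" using assms(3) by (cases r) auto
  then have "m div r < r" "n div r < r" using assms(3,4) by (simp_all add: div_less_iff_less_mult)
  with \<open>0 < r\<close> have "field_of_digits r t m = field_of_digits r t n \<longleftrightarrow>
      m mod r = n mod r \<and> m div r = n div r"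
    unfolding field_of_digits_def by (intro of_nat_plus_times_eq_iff[OF CHAR_eq t_nonprime]) simp_all
  also have "\<dots> \<longleftrightarrow> m = n" by (metis div_mult_mod_eq)
  finally show ?thesis .
qed

lemma field_of_digits_digit_diff:
  fixes t :: "'f::field"
  assumes CHAR_eq: "CHAR('f) = r" and "n < r * r"
  shows "field_of_digits r t (digit_diff r m n) = field_of_digits r t m - field_of_digits r t n"
proof -
  have "0 < r" using assms(2) by (cases r) auto
  then have le: "n mod r \<le> m mod r + r" "n div r \<le> m div r + r"
    using assms(2) by (simp_all add: div_less_iff_less_mult less_imp_le_nat trans_le_add2)
  have "field_of_digits r t (digit_diff r m n) =
      of_nat ((m mod r + r - n mod r) mod r) + of_nat ((m div r + r - n div r) mod r) * t"
    using \<open>0 < r\<close> by (simp add: field_of_digits_def digit_diff_def)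
  also have "\<dots> = (of_nat (m mod r) - of_nat (n mod r)) + (of_nat (m div r) - of_nat (n div r)) * t"
    using le by (simp add: of_nat_diff_mod_CHAR[where 'a='f, unfolded CHAR_eq])
  also have "\<dots> = field_of_digits r t m - field_of_digits r t n"
    by (simp add: field_of_digits_def algebra_simps)
  finally show ?thesis .
qed

section \<open>Difference families on an indexed group\<close>

lemma distinct_concat_nth_disjoint:
  "distinct (concat xss) \<Longrightarrow> i < length xss \<Longrightarrow> j < length xss \<Longrightarrow> i \<noteq> j
    \<Longrightarrow> set (xss ! i) \<inter> set (xss ! j) = {}"
proof (induction xss arbitrary: i j)
  case (Cons xs xss)
  have "set xs \<inter> set (xss ! k) = {}" "set (xss ! k) \<inter> set xs = {}" if "k < length xss" for k
    using Cons.prems(1) nth_mem[OF that] by auto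
  with Cons show ?case by (cases i; cases j) simp_all
qed simp

lemma count_mset_map: "count (mset (map f xs)) y = length (filter (\<lambda>x. f x = y) xs)"
  by (induction xs) auto

definition list_differences :: "(nat \<Rightarrow> nat \<Rightarrow> nat) \<Rightarrow> nat list \<Rightarrow> nat list" where
  "list_differences sub bl = map (\<lambda>(x, y). sub x y) (filter (\<lambda>(x, y). x \<noteq> y) (List.product bl bl))"

lemma card_list_differences:
  assumes "distinct bl"
  shows "card {(m, n). m \<in> set bl \<and> n \<in> set bl \<and> m \<noteq> n \<and> sub m n = k}
       = count (mset (list_differences sub bl)) k"
proof -
  define D where "D = filter (\<lambda>(m, n). m \<noteq> n) (List.product bl bl)"
  have "distinct D" using assms by (simp add: D_def distinct_product)
  then have "length (filter (\<lambda>z. (case z of (m, n) \<Rightarrow> sub m n) = k) D)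
      = card ({z. (case z of (m, n) \<Rightarrow> sub m n) = k} \<inter> set D)"
    by (rule distinct_length_filter)
  also have "{z. (case z of (m, n) \<Rightarrow> sub m n) = k} \<inter> set D
      = {(m, n). m \<in> set bl \<and> n \<in> set bl \<and> m \<noteq> n \<and> sub m n = k}"
    unfolding D_def by auto
  finally show ?thesis unfolding list_differences_def D_def count_mset_map by simp
qed

locale difference_code =
  fixes code :: "nat \<Rightarrow> 'g::ab_group_add" and N :: nat and sub :: "nat \<Rightarrow> nat \<Rightarrow> nat"
  assumes bij_code: "bij_betw code {..<N} UNIV"
    and sub_less: "m < N \<Longrightarrow> n < N \<Longrightarrow> sub m n < N"
    and code_sub: "m < N \<Longrightarrow> n < N \<Longrightarrow> code (sub m n) = code m - code n"
    and N_pos: "0 < N" and code_0: "code 0 = 0"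
begin

lemma inj_on_code: "inj_on code {..<N}"
  using bij_code by (simp add: bij_betw_def)

lemma code_eq_iff: "m < N \<Longrightarrow> n < N \<Longrightarrow> code m = code n \<longleftrightarrow> m = n"
  using inj_on_code by (auto simp: inj_on_def)

lemma code_surj:
  obtains n where "n < N" "g = code n"
proof -
  have "g \<in> code ` {..<N}" using bij_code by (simp add: bij_betw_def)
  then show ?thesis using that by blast
qed

lemma code_in_image_lessThan_iff:
  assumes "n < N"
  shows "code n \<in> code ` {..<s} \<longleftrightarrow> n < s"
proof
  assume "code n \<in> code ` {..<s}"
  then obtain m where "m < s" "code n = code m" by auto
  show "n < s"
  proof (cases "m < N")
    case True
    then show ?thesis using assms code_eq_iff \<open>m < s\<close> \<open>code n = code m\<close> by simp
  qed (use assms \<open>m < s\<close> in simp)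
qed auto

lemma code_neg: "n < N \<Longrightarrow> code (sub 0 n) = - code n"
  using code_sub[of 0 n] N_pos code_0 by simp

lemma card_pairs_with_code_difference:
  assumes "distinct bl" "set bl \<subseteq> {..<N}" "k < N"
  shows "card {(x, y). x \<in> code ` set bl \<and> y \<in> code ` set bl \<and> x \<noteq> y \<and> x - y = code k}
       = count (mset (list_differences sub bl)) k"
proof -
  define S where "S = {(m, n). m \<in> set bl \<and> n \<in> set bl \<and> m \<noteq> n \<and> sub m n = k}"
  have bl: "m < N" if "m \<in> set bl" for m using assms(2) that by auto
  have "{(x, y). x \<in> code ` set bl \<and> y \<in> code ` set bl \<and> x \<noteq> y \<and> x - y = code k}
      = map_prod code code ` S"
  proof (intro equalityI subsetI)
    fix z assume "z \<in> {(x, y). x \<in> code ` set bl \<and> y \<in> code ` set bl \<and> x \<noteq> y \<and> x - y = code k}"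
    then obtain x y where z: "z = (x, y)" "x \<in> code ` set bl" "y \<in> code ` set bl"
      "x \<noteq> y" "x - y = code k" by (cases z) simp
    obtain m n where mn: "m \<in> set bl" "n \<in> set bl" "x = code m" "y = code n"
      using z(2,3) by (elim imageE) simp
    have "m < N" "n < N" using mn(1,2) bl by simp_all
    then have "code (sub m n) = code k" using z(5) mn(3,4) code_sub by simp
    then have "sub m n = k" using code_eq_iff sub_less assms(3) \<open>m < N\<close> \<open>n < N\<close> by simp
    moreover have "m \<noteq> n" using z(4) mn(3,4) by auto
    ultimately show "z \<in> map_prod code code ` S"
      using z(1) mn unfolding S_def by (intro image_eqI[of _ _ "(m, n)"]) simp_all
  next
    fix z assume "z \<in> map_prod code code ` S"
    then obtain m n where "z = (code m, code n)" "m \<in> set bl" "n \<in> set bl" "m \<noteq> n" "sub m n = k"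
      unfolding S_def by auto
    moreover have "m < N" "n < N" using calculation(2,3) bl by simp_all
    ultimately show "z \<in> {(x, y). x \<in> code ` set bl \<and> y \<in> code ` set bl \<and> x \<noteq> y \<and> x - y = code k}"
      using code_sub[of m n, symmetric] code_eq_iff[of m n] by simp
  qed
  moreover have "inj_on (map_prod code code) S"
    by (rule inj_on_subset[OF map_prod_inj_on[OF inj_on_code inj_on_code]]) (use bl in \<open>auto simp: S_def\<close>)
  ultimately show ?thesis
    using card_list_differences[OF assms(1)] by (simp add: card_image S_def)
qed

lemma diff_count_code:
  assumes "\<forall>bl\<in>set bls. distinct bl \<and> set bl \<subseteq> {..<N}" "k < N"
  shows "diff_count (map (\<lambda>bl. code ` set bl) bls) (code k)
       = count (mset (concat (map (list_differences sub) bls))) k"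
  using assms by (induction bls) (simp_all add: diff_count_def card_pairs_with_code_difference)

lemma code_images_nth_disjoint:
  assumes "distinct (concat bls)" "set (concat bls) \<subseteq> {..<N}" "i < length bls" "j < length bls" "i \<noteq> j"
  shows "code ` set (bls ! i) \<inter> code ` set (bls ! j) = {}"
proof -
  have "set (bls ! i) \<union> set (bls ! j) \<subseteq> {..<N}" using assms(2-4) nth_mem by fastforce
  then have "code ` set (bls ! i) \<inter> code ` set (bls ! j) = code ` (set (bls ! i) \<inter> set (bls ! j))"
    by (intro inj_on_image_Int[OF inj_on_code, symmetric]) auto
  also have "\<dots> = {}" using distinct_concat_nth_disjoint[OF assms(1,3-5)] by simp
  finally show ?thesis .
qed

lemma code_blocks_and_negatives_disjoint:
  assumes dist: "distinct (concat (bls @ map (map (sub 0)) bls))" and range: "set (concat bls) \<subseteq> {..<N}"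
  defines "Bs \<equiv> map (\<lambda>bl. code ` set bl) bls"
  shows "let L = Bs @ map (\<lambda>B. uminus ` B) Bs in \<forall>i<length L. \<forall>j<length L. i \<noteq> j \<longrightarrow> L ! i \<inter> L ! j = {}"
proof -
  define bls' where "bls' = bls @ map (map (sub 0)) bls"
  have "uminus ` code ` set bl = code ` set (map (sub 0) bl)" if "bl \<in> set bls" for bl
  proof -
    have "uminus ` code ` set bl = (\<lambda>n. - code n) ` set bl" by (simp add: image_image)
    also have "\<dots> = (\<lambda>n. code (sub 0 n)) ` set bl"
      using range that code_neg by (intro image_cong) auto
    finally show ?thesis by (simp add: image_image)
  qed
  then have "Bs @ map (\<lambda>B. uminus ` B) Bs = map (\<lambda>bl. code ` set bl) bls'"
    by (simp add: Bs_def bls'_def)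
  moreover have "set (concat bls') \<subseteq> {..<N}"
    using range sub_less N_pos by (auto simp: bls'_def)
  then have "\<forall>i<length bls'. \<forall>j<length bls'. i \<noteq> j \<longrightarrow> code ` set (bls' ! i) \<inter> code ` set (bls' ! j) = {}"
    using code_images_nth_disjoint[OF dist[folded bls'_def]] by blast
  ultimately show ?thesis by (simp add: Let_def)
qed

lemma is_BRDF_code:
  assumes len: "\<forall>bl\<in>set bls. length bl = k"
    and diffs: "mset (concat (map (list_differences sub) bls)) = mset [s..<N]"
    and dist: "distinct (concat (bls @ map (map (sub 0)) bls))"
    and range: "set (concat bls) \<subseteq> {s..<N}"
  shows "is_BRDF UNIV (code ` {..<s}) k 1 (map (\<lambda>bl. code ` set bl) bls)"
proof -
  define Bs where "Bs = map (\<lambda>bl. code ` set bl) bls"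
  have bl: "distinct bl" "set bl \<subseteq> {..<N}" if "bl \<in> set bls" for bl
    using that dist range by (auto simp: distinct_concat_iff)
  have blocks: "finite B \<and> card B = k" if "B \<in> set Bs" for B
  proof -
    obtain bl where "bl \<in> set bls" "B = code ` set bl" using \<open>B \<in> set Bs\<close> by (auto simp: Bs_def)
    then have "card B = card (set bl)" using card_image[OF inj_on_subset[OF inj_on_code bl(2)]] by simp
    also have "\<dots> = k" using distinct_card[OF bl(1)] len \<open>bl \<in> set bls\<close> by simp
    finally show ?thesis using \<open>B = code ` set bl\<close> by simp
  qed
  have count: "diff_count Bs g = of_bool (g \<notin> code ` {..<s})" for g
  proof -
    obtain n where n: "n < N" "g = code n" by (rule code_surj)
    then have "diff_count Bs g = count (mset [s..<N]) n"
      using diff_count_code[of bls n] bl diffs by (simp add: Bs_def)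
    also have "\<dots> = of_bool (s \<le> n)" using n(1) by simp
    finally show ?thesis using code_in_image_lessThan_iff[OF n(1)] n(2) by auto
  qed
  have avoid: "B \<inter> code ` {..<s} = {}" if "B \<in> set Bs" for B
  proof -
    obtain bl where bl: "bl \<in> set bls" "B = code ` set bl" using \<open>B \<in> set Bs\<close> by (auto simp: Bs_def)
    have "code n \<notin> code ` {..<s}" if "n \<in> set bl" for n
    proof -
      have "s \<le> n" "n < N" using range bl(1) that by auto
      then show ?thesis using code_in_image_lessThan_iff by simp
    qed
    then show ?thesis unfolding bl(2) by (auto simp: disjoint_iff)
  qed
  have "is_RDF UNIV (code ` {..<s}) k 1 Bs"
    using blocks count unfolding is_RDF_def by simp
  moreover have "set (concat bls) \<subseteq> {..<N}" using range by auto
  ultimately show ?thesis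
    using avoid code_blocks_and_negatives_disjoint[OF dist] unfolding is_BRDF_def Bs_def by blast
qed

end

section \<open>Base blocks for \<open>q = 25, 49, 121\<close>\<close>

text \<open>Index \<open>n = a + 2 b + 4 (c + p d)\<close> with \<open>a, b < 2\<close> and \<open>c, d < p\<close> names
  \<open>(a + b w, c + d t)\<close>; the certificates below are written in these indices.\<close>

definition pair_code :: "'a::field \<Rightarrow> 'b::field \<Rightarrow> nat \<Rightarrow> nat \<Rightarrow> 'a \<times> 'b" where
  "pair_code w t p n = (field_of_digits 2 w (n mod 4), field_of_digits p t (n div 4))"

definition code_diff :: "nat \<Rightarrow> nat \<Rightarrow> nat \<Rightarrow> nat" where
  "code_diff p m n = digit_diff 2 (m mod 4) (n mod 4) + 4 * digit_diff p (m div 4) (n div 4)"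

lemma field_of_digits_0 [simp]: "field_of_digits r t 0 = 0"
  by (simp add: field_of_digits_def)

lemma code_diff_digits:
  "code_diff p m n mod 4 = digit_diff 2 (m mod 4) (n mod 4)"
  "code_diff p m n div 4 = digit_diff p (m div 4) (n div 4)"
  using digit_diff_less[of 2 "m mod 4" "n mod 4"] by (simp_all add: code_diff_def)

text \<open>Certificates are checked by \<open>simp\<close>, for which this bottom-up merge sort is much faster
  than insertion sort (\<^const>\<open>sort\<close>).\<close>

fun merge :: "nat list \<Rightarrow> nat list \<Rightarrow> nat list" where
  "merge [] ys = ys"
| "merge xs [] = xs"
| "merge (x # xs) (y # ys) = (if x \<le> y then x # merge xs (y # ys) else y # merge (x # xs) ys)"

fun merge_pairs :: "nat list list \<Rightarrow> nat list list" where
  "merge_pairs (xs # ys # xss) = merge xs ys # merge_pairs xss"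
| "merge_pairs xss = xss"

lemma length_merge_pairs: "length (merge_pairs xss) = (length xss + 1) div 2"
  by (induction xss rule: merge_pairs.induct) auto

function merge_all :: "nat list list \<Rightarrow> nat list" where
  "merge_all [] = []"
| "merge_all [xs] = xs"
| "merge_all (xs # ys # xss) = merge_all (merge_pairs (xs # ys # xss))"
  by pat_completeness auto
termination by (relation "measure length") (auto simp: length_merge_pairs)

definition msort :: "nat list \<Rightarrow> nat list" where
  "msort xs = merge_all (map (\<lambda>x. [x]) xs)"

lemma mset_merge: "mset (merge xs ys) = mset xs + mset ys"
  by (induction xs ys rule: merge.induct) auto

lemma mset_merge_pairs: "(\<Sum>xs\<leftarrow>merge_pairs xss. mset xs) = (\<Sum>xs\<leftarrow>xss. mset xs)"
  by (induction xss rule: merge_pairs.induct) (auto simp: mset_merge add.assoc)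

lemma mset_merge_all: "mset (merge_all xss) = (\<Sum>xs\<leftarrow>xss. mset xs)"
proof (induction xss rule: merge_all.induct)
  case (3 xs ys xss)
  then show ?case using mset_merge_pairs[of "xs # ys # xss"] by simp
qed auto

lemma mset_msort [simp]: "mset (msort xs) = mset xs"
  by (induction xs) (auto simp: msort_def mset_merge_all)

definition certificate :: "nat \<Rightarrow> nat list list \<Rightarrow> nat \<Rightarrow> bool" where
  "certificate p bls c \<longleftrightarrow>
     (let pts = concat (bls @ map (map (code_diff p 0)) bls) in
       list_all (\<lambda>bl. length bl = 4) bls \<and>
       msort (concat (map (list_differences (code_diff p)) bls)) = [4..<4 * (p * p)] \<and>
       sorted_wrt (<) (msort pts) \<and>
       list_all (\<lambda>x. 4 \<le> x \<and> x < 4 * (p * p) \<and> x div 4 \<noteq> c) pts \<and>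
       c < p * p \<and> c \<noteq> digit_diff p 0 c)"

lemma certificateD:
  assumes "certificate p bls c"
  defines "pts \<equiv> concat (bls @ map (map (code_diff p 0)) bls)"
  shows "\<forall>bl\<in>set bls. length bl = 4"
    and "mset (concat (map (list_differences (code_diff p)) bls)) = mset [4..<4 * (p * p)]"
    and "distinct pts"
    and "\<forall>x\<in>set pts. 4 \<le> x \<and> x < 4 * (p * p) \<and> x div 4 \<noteq> c"
    and "c < p * p" and "c \<noteq> digit_diff p 0 c"
proof -
  have sorted: "msort (concat (map (list_differences (code_diff p)) bls)) = [4..<4 * (p * p)]"
    "sorted_wrt (<) (msort pts)"
    using assms(1) unfolding certificate_def Let_def pts_def[symmetric] by simp_all
  show "mset (concat (map (list_differences (code_diff p)) bls)) = mset [4..<4 * (p * p)]"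
    using mset_msort sorted(1) by metis
  show "distinct pts"
    using sorted(2) mset_eq_imp_distinct_iff[OF mset_msort[of pts]] by (simp add: strict_sorted_iff)
  show "\<forall>bl\<in>set bls. length bl = 4" "\<forall>x\<in>set pts. 4 \<le> x \<and> x < 4 * (p * p) \<and> x div 4 \<noteq> c"
    "c < p * p" "c \<noteq> digit_diff p 0 c"
    using assms(1) unfolding certificate_def Let_def pts_def[symmetric] by (simp_all add: list_all_iff)
qed

context
  fixes w :: "'a::{field,finite}" and t :: "'b::{field,finite}" and p :: nat
  assumes CHAR_a: "CHAR('a) = 2" and w: "w \<notin> range of_int" and card_a: "card (UNIV :: 'a set) = 4"
    and CHAR_b: "CHAR('b) = p" and t: "t \<notin> range of_int" and card_b: "card (UNIV :: 'b set) = p * p"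
begin

lemma pair_code_eq_iff:
  assumes "m < 4 * (p * p)" "n < 4 * (p * p)"
  shows "pair_code w t p m = pair_code w t p n \<longleftrightarrow> m = n"
proof -
  have "m div 4 < p * p" "n div 4 < p * p" using assms by simp_all
  then have "pair_code w t p m = pair_code w t p n \<longleftrightarrow> m mod 4 = n mod 4 \<and> m div 4 = n div 4"
    by (simp add: pair_code_def field_of_digits_eq_iff[OF CHAR_a w] field_of_digits_eq_iff[OF CHAR_b t])
  also have "\<dots> \<longleftrightarrow> m = n" by (metis div_mult_mod_eq)
  finally show ?thesis .
qed

lemma difference_code_pair_code: "difference_code (pair_code w t p) (4 * (p * p)) (code_diff p)"
proof
  have p_pos: "0 < p" using card_b by (cases p) auto
  show "bij_betw (pair_code w t p) {..<4 * (p * p)} UNIV"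
  proof (rule bij_betw_UNIV_if_inj_on)
    show "inj_on (pair_code w t p) {..<4 * (p * p)}"
      using pair_code_eq_iff by (auto intro: inj_onI)
    show "card {..<4 * (p * p)} = card (UNIV :: ('a \<times> 'b) set)"
      using card_a card_b by (simp flip: UNIV_Times_UNIV add: card_cartesian_product)
  qed simp
  show "0 < 4 * (p * p)" using p_pos by simp
  show "pair_code w t p 0 = 0" by (simp add: pair_code_def zero_prod_def)
  fix m n assume "m < 4 * (p * p)" "n < 4 * (p * p)"
  then have "n div 4 < p * p" by simp
  show "code_diff p m n < 4 * (p * p)"
    using digit_diff_less[of 2 "m mod 4" "n mod 4"] digit_diff_less[OF p_pos, of "m div 4" "n div 4"]
    unfolding code_diff_def by linarith
  show "pair_code w t p (code_diff p m n) = pair_code w t p m - pair_code w t p n"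
    using \<open>n div 4 < p * p\<close>
    by (simp add: pair_code_def code_diff_digits field_of_digits_digit_diff[OF CHAR_a]
        field_of_digits_digit_diff[OF CHAR_b])
qed

lemma snd_pair_code_eq_iff:
  assumes "n < 4 * (p * p)" "c < p * p"
  shows "snd (pair_code w t p n) = field_of_digits p t c \<longleftrightarrow> n div 4 = c"
  using assms by (simp add: pair_code_def field_of_digits_eq_iff[OF CHAR_b t])

lemma pair_code_image_lessThan_4: "pair_code w t p ` {..<4} = {g. snd g = 0}"
proof (intro equalityI subsetI)
  fix g assume "g \<in> pair_code w t p ` {..<4}"
  then show "g \<in> {g. snd g = 0}" by (auto simp: pair_code_def)
next
  interpret difference_code "pair_code w t p" "4 * (p * p)" "code_diff p"
    by (rule difference_code_pair_code)
  fix g :: "'a \<times> 'b" assume "g \<in> {g. snd g = 0}"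
  obtain n where n: "n < 4 * (p * p)" "g = pair_code w t p n" by (rule code_surj)
  then have "n div 4 = 0"
    using \<open>g \<in> {g. snd g = 0}\<close> snd_pair_code_eq_iff[OF n(1), of 0] N_pos by simp
  then show "g \<in> pair_code w t p ` {..<4}" using n(2) by auto
qed

lemma is_BRDF_of_certificate:
  assumes "certificate p bls c"
  shows "is_BRDF UNIV {g. snd g = 0} 4 1 (map (\<lambda>bl. pair_code w t p ` set bl) bls)"
proof -
  interpret difference_code "pair_code w t p" "4 * (p * p)" "code_diff p"
    by (rule difference_code_pair_code)
  note cert = certificateD[OF assms]
  have "set (concat bls) \<subseteq> {4..<4 * (p * p)}" using cert(4) by auto
  with cert(1-3) have "is_BRDF UNIV (pair_code w t p ` {..<4}) 4 1 (map (\<lambda>bl. pair_code w t p ` set bl) bls)"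
    by (rule is_BRDF_code)
  then show ?thesis by (simp add: pair_code_image_lessThan_4)
qed

lemma row_avoided_of_certificate:
  assumes "certificate p bls c"
  defines "c' \<equiv> field_of_digits p t c"
  shows "c' \<noteq> - c'" and "\<forall>B\<in>set (map (\<lambda>bl. pair_code w t p ` set bl) bls). \<forall>x\<in>B. snd x \<noteq> c' \<and> snd x \<noteq> - c'"
proof -
  interpret difference_code "pair_code w t p" "4 * (p * p)" "code_diff p"
    by (rule difference_code_pair_code)
  define pts where "pts = concat (bls @ map (map (code_diff p 0)) bls)"
  note cert = certificateD[OF assms(1), folded pts_def]
  have snd_ne: "snd (pair_code w t p n) \<noteq> c'" if "n \<in> set pts" for n
    using cert(4) that snd_pair_code_eq_iff[OF _ cert(5)] by (auto simp: c'_def)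
  have "- c' = field_of_digits p t (digit_diff p 0 c)"
    using field_of_digits_digit_diff[OF CHAR_b cert(5), where m = 0] by (simp add: c'_def)
  moreover have "0 < p" using cert(5) by (cases p) auto
  ultimately show "c' \<noteq> - c'"
    using cert(5,6) field_of_digits_eq_iff[OF CHAR_b t cert(5) digit_diff_less] by (auto simp: c'_def)
  show "\<forall>B\<in>set (map (\<lambda>bl. pair_code w t p ` set bl) bls). \<forall>x\<in>B. snd x \<noteq> c' \<and> snd x \<noteq> - c'"
  proof (intro ballI)
    fix B x assume "B \<in> set (map (\<lambda>bl. pair_code w t p ` set bl) bls)" "x \<in> B"
    then obtain bl n where bl: "bl \<in> set bls" "n \<in> set bl" "x = pair_code w t p n" by auto
    then have "n \<in> set pts" "code_diff p 0 n \<in> set pts" by (auto simp: pts_def)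
    moreover have "snd (pair_code w t p (code_diff p 0 n)) = - snd x"
      using code_neg \<open>n \<in> set pts\<close> cert(4) bl(3) by simp
    ultimately show "snd x \<noteq> c' \<and> snd x \<noteq> - c'"
      using snd_ne bl(3) by (metis minus_minus)
  qed
qed

end

lemma certificate_5: "certificate 5
    [[15, 88, 37, 20], [19, 44, 69, 60], [8, 26, 18, 70], [4, 74, 10, 86],
     [78, 41, 99, 62], [90, 21, 51, 82], [43, 72, 52, 17], [23, 96, 36, 9]]
    16"
  by (simp add: certificate_def Let_def list_differences_def code_diff_def digit_diff_def msort_def
      upt_rec sorted_wrt1 sorted_wrt2[OF transp_on_less] del: sorted_wrt.simps(2))

lemma certificate_7: "certificate 7
    [[162, 41, 48, 138], [78, 45, 84, 142], [42, 65, 36, 118], [46, 149, 24, 14],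
     [104, 44, 195, 74], [192, 64, 55, 22], [52, 148, 135, 158], [132, 184, 123, 30],
     [122, 163, 23, 143], [34, 79, 159, 119], [174, 43, 31, 15], [94, 47, 155, 91],
     [29, 38, 33, 179], [153, 26, 173, 115], [9, 178, 93, 191], [69, 114, 105, 7]]
    20"
  by (simp add: certificate_def Let_def list_differences_def code_diff_def digit_diff_def msort_def
      upt_rec sorted_wrt1 sorted_wrt2[OF transp_on_less] del: sorted_wrt.simps(2))

lemma certificate_11: "certificate 11
    [[429, 85, 312, 110], [317, 305, 236, 170], [457, 285, 420, 78], [401, 153, 360, 350],
     [229, 165, 452, 282], [465, 341, 180, 418], [357, 325, 248, 142], [233, 413, 112, 474],
     [201, 405, 388, 314], [381, 449, 56, 238], [181, 324, 176, 407], [249, 412, 28, 451],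
     [113, 404, 88, 447], [389, 448, 36, 227], [57, 444, 44, 247], [217, 224, 40, 379],
     [293, 244, 264, 367], [109, 376, 20, 191], [169, 364, 132, 207], [77, 188, 32, 119],
     [62, 7, 134, 69], [438, 223, 34, 393], [274, 27, 310, 277], [462, 355, 18, 197],
     [138, 15, 398, 161], [254, 179, 10, 121], [334, 31, 442, 345], [370, 91, 6, 61],
     [410, 39, 222, 437], [186, 47, 26, 273], [115, 89, 463, 67], [391, 37, 139, 175],
     [59, 45, 255, 299], [219, 41, 335, 331], [295, 265, 371, 151], [111, 21, 411, 431],
     [171, 133, 187, 319], [79, 33, 471, 459], [351, 309, 95, 403], [283, 17, 259, 231]]
    120"
  by (simp add: certificate_def Let_def list_differences_def code_diff_def digit_diff_def msort_def
      upt_rec sorted_wrt1 sorted_wrt2[OF transp_on_less] del: sorted_wrt.simps(2))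

lemma BRDF_and_nested_BIBD_of_certificate:
  assumes card_a: "card (UNIV :: 'a::{field,finite} set) = 4"
    and card_b: "card (UNIV :: 'b::{field,finite} set) = p * p"
    and "prime p" and cert: "certificate p bls c"
  shows "(\<exists>Bs :: ('a \<times> 'b) set list. is_BRDF UNIV {g. snd g = 0} 4 1 Bs) \<and>
         (\<exists>As :: nat set multiset.
            is_nested_BIBD {0..<4 * card (UNIV :: 'b set)} (4 * card (UNIV :: 'b set)) As)"
proof -
  have CHAR_a: "CHAR('a) = 2"
    using CHAR_eq_of_card_eq_prime_power[of 2 2] card_a by simp
  have CHAR_b: "CHAR('b) = p"
    using CHAR_eq_of_card_eq_prime_power[of p 2] card_b \<open>prime p\<close> by (simp add: power2_eq_square)
  have "CHAR('a) < card (UNIV :: 'a set)" using CHAR_a card_a by simp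
  then obtain w :: 'a where w: "w \<notin> range of_int" by (rule exists_not_in_prime_subfield)
  have "CHAR('b) < card (UNIV :: 'b set)"
    using CHAR_b card_b prime_gt_1_nat[OF \<open>prime p\<close>] by simp
  then obtain t :: 'b where t: "t \<notin> range of_int" by (rule exists_not_in_prime_subfield)
  define Bs where "Bs = map (\<lambda>bl. pair_code w t p ` set bl) bls"
  define c' where "c' = field_of_digits p t c"
  note BRDF = is_BRDF_of_certificate[OF CHAR_a w card_a CHAR_b t card_b cert, folded Bs_def]
    row_avoided_of_certificate[OF CHAR_a w card_a CHAR_b t card_b cert, folded Bs_def c'_def]
  have nested: "is_nested_BIBD UNIV (card (UNIV :: ('a \<times> 'b) set)) (image_mset fst (nested_development Bs c'))"
    using BRDF card_a by (intro is_nested_BIBD_nested_development)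
  have card_G: "card (UNIV :: ('a \<times> 'b) set) = 4 * card (UNIV :: 'b set)"
    using card_a by (simp flip: UNIV_Times_UNIV add: card_cartesian_product)
  obtain h :: "'a \<times> 'b \<Rightarrow> nat" where "bij_betw h UNIV {0..<card (UNIV :: ('a \<times> 'b) set)}"
    using ex_bij_betw_finite_nat[of "UNIV :: ('a \<times> 'b) set"] by auto
  from is_nested_BIBD_image[OF this nested] show ?thesis
    unfolding card_G using BRDF(1) by blast
qed

theorem mainTheorem18:
  assumes "card (UNIV :: 'a::{field,finite} set) = 4"
    and "card (UNIV :: 'b::{field,finite} set) \<in> {25, 49, 121}"
  shows "(\<exists>Bs :: ('a \<times> 'b) set list. is_BRDF UNIV {p. snd p = 0} 4 1 Bs) \<and>
         (\<exists>As :: nat set multiset.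
            is_nested_BIBD {0..<4 * card (UNIV :: 'b set)} (4 * card (UNIV :: 'b set)) As)"
proof -
  consider "card (UNIV :: 'b set) = 5 * 5" | "card (UNIV :: 'b set) = 7 * 7"
    | "card (UNIV :: 'b set) = 11 * 11"
    using assms(2) by auto
  then show ?thesis
  proof cases
    case 1
    show ?thesis by (rule BRDF_and_nested_BIBD_of_certificate[OF assms(1) 1 _ certificate_5]) simp
  next
    case 2
    show ?thesis by (rule BRDF_and_nested_BIBD_of_certificate[OF assms(1) 2 _ certificate_7]) simp
  next
    case 3
    show ?thesis by (rule BRDF_and_nested_BIBD_of_certificate[OF assms(1) 3 _ certificate_11]) simp
  qed
qed

end
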